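(* Let $(X,d)$ be a compact metric space, $f_{1,\infty}$ a sequence of continuous self-maps of $X$ and $m\ge2$. If $(\mathcal{M}(X),\widetilde{f}_{1,\infty})$ is weakly mixing of order $m$, then $(X,f_{1,\infty})$ is weakly mixing of order $m$.
   Context: For $f_{1,\infty}=\{f_n\}_{n\ge1}$ write $f_1^n=f_n\circ\cdots\circ f_1$. $\mathcal{M}(X)$ is the space of Borel probability measures on $X$ with the weak$^*$ topology, and $\widetilde{f}_1^n(\mu)(A)=\mu((f_1^n)^{-1}(A))$ for Borel $A$. A non-autonomous system $(Y,g_{1,\infty})$ is weakly mixing of order $m$ ($m\ge2$) if for any non-empty open sets $U_1,\dots,U_m,V_1,\dots,V_m\subseteq Y$ there is $n\in\mathbb{N}$ with $g_1^n(U_i)\cap V_i\neq\emptyset$ for all $1\le i\le m$. *)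

theory Defs
  imports "HOL-Probability.Probability"
begin

text \<open>Non-autonomous composition: nacomp f n = f n o ... o f 1 (f 0 is unused; nacomp f 0 = id).\<close>
primrec nacomp :: "(nat \<Rightarrow> 'b \<Rightarrow> 'b) \<Rightarrow> nat \<Rightarrow> 'b \<Rightarrow> 'b" where
  "nacomp f 0 = id"
| "nacomp f (Suc n) = f (Suc n) \<circ> nacomp f n"

definition weakly_mixing_order :: "'b topology \<Rightarrow> (nat \<Rightarrow> 'b \<Rightarrow> 'b) \<Rightarrow> nat \<Rightarrow> bool" where
  "weakly_mixing_order T g m \<longleftrightarrow>
     (\<forall>U V :: nat \<Rightarrow> 'b set.
        (\<forall>i\<in>{1..m}. openin T (U i) \<and> U i \<noteq> {} \<and> openin T (V i) \<and> V i \<noteq> {}) \<longrightarrow>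
        (\<exists>n\<ge>1. \<forall>i\<in>{1..m}. nacomp g n ` U i \<inter> V i \<noteq> {}))"

text \<open>The space M(X) of Borel probability measures on X (here X is the whole type).\<close>
definition prob_measures :: "'a::topological_space measure set" where
  "prob_measures = {\<mu>. prob_space \<mu> \<and> sets \<mu> = sets borel}"

definition weak_star_topology :: "'a::topological_space measure topology" where
  "weak_star_topology = topology (generate_topology_on
     {{\<mu> \<in> prob_measures. integral\<^sup>L \<mu> g \<in> W} | g W. continuous_on UNIV g \<and> open (W :: real set)})"

definition induced_map :: "('a::topological_space \<Rightarrow> 'a) \<Rightarrow> 'a measure \<Rightarrow> 'a measure" where
  "induced_map h \<mu> = distr \<mu> borel h"

end

theory Submission
  imports Defs
begin

text \<open>For a ball \<open>B(x, r)\<close> let \<open>\<tau>\<close> be the tent function equal to \<open>1\<close> at \<open>x\<close> and vanishing off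
  \<open>B(x, r)\<close>. The measures \<open>\<mu>\<close> with \<open>\<integral> \<tau> d\<mu> > 1/2\<close> form a weak* open set containing the Dirac
  measure at \<open>x\<close>. If \<open>\<mu>\<close> lies in the set for \<open>B(x, r)\<close> and \<open>F\<^sub>*\<mu>\<close> in the set for \<open>B(y, s)\<close>, then
  \<open>F(B(x, r))\<close> meets \<open>B(y, s)\<close>: otherwise \<open>\<tau>\<^sub>x + \<tau>\<^sub>y \<circ> F \<le> 1\<close> pointwise, and integrating against
  \<open>\<mu>\<close> gives \<open>1/2 + 1/2 < 1\<close>. Applying the mixing of the induced system to these neighbourhoods
  of Dirac measures, with \<open>F = f\<^sub>1\<^sup>n\<close>, yields the mixing of the system on \<open>X\<close>.\<close>

lemma continuous_on_nacomp:
  assumes "\<And>n. continuous_on UNIV (f n)"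
  shows "continuous_on UNIV (nacomp f n)"
proof (induction n)
  case (Suc n)
  have "continuous_on (range (nacomp f n)) (f (Suc n))"
    using assms continuous_on_subset subset_UNIV by blast
  then show ?case using continuous_on_compose[OF Suc] by simp
qed (simp add: id_def)

lemma nacomp_induced_map:
  fixes f :: "nat \<Rightarrow> 'a::topological_space \<Rightarrow> 'a"
  assumes "\<And>n. continuous_on UNIV (f n)" and "sets \<mu> = sets borel"
  shows "nacomp (\<lambda>n. induced_map (f n)) n \<mu> = distr \<mu> borel (nacomp f n)"
proof (induction n)
  case 0
  have "distr \<mu> borel (\<lambda>x. x) = \<mu>" by (rule distr_id2) (use assms(2) in simp)
  then show ?case by (simp add: id_def)
next
  case (Suc n)
  have nacomp_meas: "nacomp f n \<in> measurable \<mu> borel"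
    unfolding measurable_cong_sets[OF assms(2) refl]
    by (rule borel_measurable_continuous_onI[OF continuous_on_nacomp[OF assms(1)]])
  have "nacomp (\<lambda>n. induced_map (f n)) (Suc n) \<mu>
      = distr (distr \<mu> borel (nacomp f n)) borel (f (Suc n))"
    by (simp only: nacomp.simps o_apply Suc induced_map_def)
  also have "\<dots> = distr \<mu> borel (f (Suc n) \<circ> nacomp f n)"
    using borel_measurable_continuous_onI[OF assms(1)] nacomp_meas
    by (rule distr_distr)
  finally show ?case by (simp only: nacomp.simps)
qed

definition tent :: "'a::metric_space \<Rightarrow> real \<Rightarrow> 'a \<Rightarrow> real" where
  "tent x r y = max 0 (1 - dist y x / r)"

lemma continuous_on_tent: "continuous_on UNIV (tent x r)"
  unfolding tent_def divide_inverse by (intro continuous_intros)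

lemma borel_measurable_tent: "tent x r \<in> borel_measurable borel"
  by (rule borel_measurable_continuous_onI[OF continuous_on_tent])

lemma tent_nonneg: "r > 0 \<Longrightarrow> 0 \<le> tent x r y"
  and tent_le_1: "r > 0 \<Longrightarrow> tent x r y \<le> 1"
  by (auto simp: tent_def)

lemma abs_tent_le_1: "r > 0 \<Longrightarrow> \<bar>tent x r y\<bar> \<le> 1"
  by (simp add: tent_nonneg tent_le_1)

lemma tent_center: "r > 0 \<Longrightarrow> tent x r x = 1"
  by (simp add: tent_def)

lemma tent_pos_imp_mem_ball:
  assumes "r > 0" "tent x r y > 0"
  shows "y \<in> ball x r"
proof -
  have "dist y x / r < 1" using assms(2) by (simp add: tent_def)
  with assms(1) show ?thesis by (simp add: dist_commute)
qed

definition tent_nbhd :: "'a::metric_space \<Rightarrow> real \<Rightarrow> 'a measure set" where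
  "tent_nbhd x r = {\<mu> \<in> prob_measures. integral\<^sup>L \<mu> (tent x r) \<in> {1/2<..}}"

lemma openin_tent_nbhd: "openin weak_star_topology (tent_nbhd x r)"
proof -
  have "tent_nbhd x r \<in> {{\<mu> \<in> prob_measures. integral\<^sup>L \<mu> g \<in> W} | g W.
      continuous_on UNIV g \<and> open (W :: real set)}"
    unfolding tent_nbhd_def using continuous_on_tent open_greaterThan by blast
  then show ?thesis
    unfolding weak_star_topology_def openin_topology_generated_by_iff
    by (rule generate_topology_on.Basis)
qed

lemma return_in_tent_nbhd: "r > 0 \<Longrightarrow> return borel x \<in> tent_nbhd x r"
  by (simp add: tent_nbhd_def prob_measures_def prob_space_return
      integral_return borel_measurable_tent tent_center)

lemma tent_sum_le_1:
  assumes "r > 0" "s > 0" "F ` ball x r \<inter> ball y s = {}"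
  shows "tent x r z + tent y s (F z) \<le> 1"
proof -
  have "\<not> (tent x r z > 0 \<and> tent y s (F z) > 0)"
    using assms tent_pos_imp_mem_ball[of r x z] tent_pos_imp_mem_ball[of s y "F z"] by blast
  moreover have "tent x r z \<le> 1" "tent y s (F z) \<le> 1" "0 \<le> tent x r z" "0 \<le> tent y s (F z)"
    using assms(1,2) by (simp_all add: tent_le_1 tent_nonneg)
  ultimately show ?thesis by linarith
qed

lemma image_ball_meets_ball_if_tent_nbhd:
  assumes "r > 0" "s > 0" "F \<in> borel_measurable borel"
    and "\<mu> \<in> tent_nbhd x r" "distr \<mu> borel F \<in> tent_nbhd y s"
  shows "F ` ball x r \<inter> ball y s \<noteq> {}"
proof
  assume disjoint: "F ` ball x r \<inter> ball y s = {}"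
  have sets_\<mu>: "sets \<mu> = sets borel" and prob: "prob_space \<mu>"
    using assms(4) by (auto simp: tent_nbhd_def prob_measures_def)
  interpret prob_space \<mu> by (fact prob)
  have F_meas: "F \<in> borel_measurable \<mu>"
    using assms(3) measurable_cong_sets[OF sets_\<mu> refl] by blast
  have int_x: "integrable \<mu> (tent x r)"
    using borel_measurable_tent measurable_cong_sets[OF sets_\<mu> refl]
    by (intro integrable_const_bound[where B=1] AE_I2) (auto simp: abs_tent_le_1[OF assms(1)])
  have int_y: "integrable \<mu> (\<lambda>z. tent y s (F z))"
    using measurable_comp[OF F_meas borel_measurable_tent]
    by (intro integrable_const_bound[where B=1] AE_I2) (auto simp: o_def abs_tent_le_1[OF assms(2)])
  have "1/2 + 1/2 < integral\<^sup>L \<mu> (tent x r) + integral\<^sup>L \<mu> (\<lambda>z. tent y s (F z))"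
    using assms(4,5) integral_distr[OF F_meas borel_measurable_tent] by (simp add: tent_nbhd_def)
  also have "\<dots> = integral\<^sup>L \<mu> (\<lambda>z. tent x r z + tent y s (F z))"
    using int_x int_y by simp
  also have "\<dots> \<le> integral\<^sup>L \<mu> (\<lambda>z. 1)"
    using int_x int_y tent_sum_le_1[OF assms(1,2) disjoint] by (intro integral_mono) auto
  also have "\<dots> = 1"
    by (simp add: prob_space)
  finally show False by simp
qed

lemma weakly_mixing_orderD:
  assumes "weakly_mixing_order T g m"
    and "\<And>i. i \<in> {1..m} \<Longrightarrow> openin T (U i) \<and> U i \<noteq> {} \<and> openin T (V i) \<and> V i \<noteq> {}"
  shows "\<exists>n\<ge>1. \<forall>i\<in>{1..m}. nacomp g n ` U i \<inter> V i \<noteq> {}"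
  using assms unfolding weakly_mixing_order_def by blast

lemma obtain_balls_in_open_sets:
  fixes U :: "'i \<Rightarrow> 'a::metric_space set"
  assumes "\<forall>i\<in>I. open (U i) \<and> U i \<noteq> {}"
  obtains x r where "\<forall>i\<in>I. r i > 0 \<and> ball (x i) (r i) \<subseteq> U i"
proof -
  have "\<forall>i\<in>I. \<exists>c. snd c > 0 \<and> ball (fst c) (snd c) \<subseteq> U i"
    using assms open_contains_ball by fastforce
  then obtain c where "\<forall>i\<in>I. snd (c i) > 0 \<and> ball (fst (c i)) (snd (c i)) \<subseteq> U i"
    by (rule bchoice[elim_format]) blast
  then show thesis by (rule that)
qed

lemma weakly_mixing_order_euclidean_ballsI:
  fixes g :: "nat \<Rightarrow> 'a::metric_space \<Rightarrow> 'a"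
  assumes "\<And>xu ru xv rv. \<forall>i\<in>{1..m}. ru i > 0 \<and> rv i > 0 \<Longrightarrow>
      \<exists>n\<ge>1. \<forall>i\<in>{1..m}. nacomp g n ` ball (xu i) (ru i) \<inter> ball (xv i) (rv i) \<noteq> {}"
  shows "weakly_mixing_order euclidean g m"
  unfolding weakly_mixing_order_def
proof (intro allI impI)
  fix U V :: "nat \<Rightarrow> 'a set"
  assume "\<forall>i\<in>{1..m}. openin euclidean (U i) \<and> U i \<noteq> {} \<and> openin euclidean (V i) \<and> V i \<noteq> {}"
  then have "\<forall>i\<in>{1..m}. open (U i) \<and> U i \<noteq> {}" "\<forall>i\<in>{1..m}. open (V i) \<and> V i \<noteq> {}"
    by auto
  then obtain xu ru xv rv where
    balls_U: "\<forall>i\<in>{1..m}. ru i > 0 \<and> ball (xu i) (ru i) \<subseteq> U i" and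
    balls_V: "\<forall>i\<in>{1..m}. rv i > 0 \<and> ball (xv i) (rv i) \<subseteq> V i"
    by (elim obtain_balls_in_open_sets)
  then have "\<exists>n\<ge>1. \<forall>i\<in>{1..m}. nacomp g n ` ball (xu i) (ru i) \<inter> ball (xv i) (rv i) \<noteq> {}"
    by (intro assms) auto
  then obtain n where "n \<ge> 1"
    and hit: "\<forall>i\<in>{1..m}. nacomp g n ` ball (xu i) (ru i) \<inter> ball (xv i) (rv i) \<noteq> {}"
    by blast
  have "nacomp g n ` U i \<inter> V i \<noteq> {}" if i: "i \<in> {1..m}" for i
  proof -
    have "nacomp g n ` ball (xu i) (ru i) \<inter> ball (xv i) (rv i) \<subseteq> nacomp g n ` U i \<inter> V i"
      using balls_U balls_V i by (intro Int_mono image_mono) auto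
    with hit i show ?thesis by blast
  qed
  with \<open>n \<ge> 1\<close> show "\<exists>n\<ge>1. \<forall>i\<in>{1..m}. nacomp g n ` U i \<inter> V i \<noteq> {}"
    by blast
qed

theorem mainTheorem4:
  fixes f :: "nat \<Rightarrow> 'a::metric_space \<Rightarrow> 'a" and m :: nat
  assumes "compact (UNIV :: 'a set)"
    and "\<And>n. continuous_on UNIV (f n)"
    and "m \<ge> 2"
    and "weakly_mixing_order weak_star_topology (\<lambda>n. induced_map (f n)) m"
  shows "weakly_mixing_order euclidean f m"
proof (rule weakly_mixing_order_euclidean_ballsI)
  fix xu xv :: "nat \<Rightarrow> 'a" and ru rv :: "nat \<Rightarrow> real"
  assume radii: "\<forall>i\<in>{1..m}. ru i > 0 \<and> rv i > 0"
  then have "\<exists>n\<ge>1. \<forall>i\<in>{1..m}.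
      nacomp (\<lambda>n. induced_map (f n)) n ` tent_nbhd (xu i) (ru i) \<inter> tent_nbhd (xv i) (rv i) \<noteq> {}"
    using return_in_tent_nbhd openin_tent_nbhd by (intro weakly_mixing_orderD[OF assms(4)]) blast
  then obtain n where "n \<ge> 1" and hit: "\<forall>i\<in>{1..m}.
      nacomp (\<lambda>n. induced_map (f n)) n ` tent_nbhd (xu i) (ru i) \<inter> tent_nbhd (xv i) (rv i) \<noteq> {}"
    by blast
  have "nacomp f n ` ball (xu i) (ru i) \<inter> ball (xv i) (rv i) \<noteq> {}" if i: "i \<in> {1..m}" for i
  proof -
    obtain \<mu> where \<mu>: "\<mu> \<in> tent_nbhd (xu i) (ru i)"
      "nacomp (\<lambda>n. induced_map (f n)) n \<mu> \<in> tent_nbhd (xv i) (rv i)"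
      using hit i by blast
    then have "sets \<mu> = sets borel" by (simp add: tent_nbhd_def prob_measures_def)
    with \<mu> radii i show ?thesis
      by (intro image_ball_meets_ball_if_tent_nbhd borel_measurable_continuous_onI
          continuous_on_nacomp assms(2)) (auto simp: nacomp_induced_map[OF assms(2)])
  qed
  with \<open>n \<ge> 1\<close> show "\<exists>n\<ge>1. \<forall>i\<in>{1..m}. nacomp f n ` ball (xu i) (ru i) \<inter> ball (xv i) (rv i) \<noteq> {}"
    by blast
qed

end
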